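(* Let $\sigma>0$, $r\in\mathbb{R}$, $A>0$ and $B>0$, and consider the system of ODEs \[ \dot{x}_d = X,\quad \dot{X}=\sigma\big(Y-X+A\sin(Bx_d)\big),\quad \dot{Y}=-XZ+rX-Y,\quad \dot{Z}=XY-Z . \] Let $k$ be an odd integer and consider the equilibrium $(x_d,X,Y,Z)=(k\pi/B,0,0,0)$. The eigenvalues of the Jacobian at this equilibrium are $-1$ together with the roots of the cubic $\lambda^3+(\sigma+1)\lambda^2+\sigma(1-r+AB)\lambda+AB\sigma$. Define \[ r_c = 1+AB\,\frac{\sigma}{\sigma+1}. \] Then: (i) if all roots of the cubic are real, they are all negative when $r<1+AB$, while when $r>1+AB$ two of them are positive; (ii) if the cubic has a pair of non-real complex conjugate roots, then its remaining real root is negative, and the complex conjugate pair has negative real part when $r<r_c$ and positive real part when $r>r_c$; (iii) at $r=r_c$ the cubic has a pair of purely imaginary roots $\pm i\omega$ with $\omega^2 = AB\,\sigma/(\sigma+1)$.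
   Context: The system models a one-dimensional wave-particle entity (a walking droplet) in the sinusoidal potential $U(x)=(A/B)\cos(Bx)$: $x_d$ is the particle position, $X$ its velocity, and $Y,Z$ are wave-memory variables. The equilibria with odd $k$ correspond to the particle sitting at the minima of the potential. *)

theory Defs
  imports "HOL-Analysis.Analysis" "HOL-Computational_Algebra.Polynomial"
begin

text \<open>State vector (x_d, X, Y, Z) = (v$1, v$2, v$3, v$4) in real^4.\<close>
definition droplet_field :: "real \<Rightarrow> real \<Rightarrow> real \<Rightarrow> real \<Rightarrow> real^4 \<Rightarrow> real^4" where
  "droplet_field \<sigma> r A B v =
     vector [v$2,
             \<sigma> * (v$3 - v$2 + A * sin (B * v$1)),
             - (v$2 * v$4) + r * v$2 - v$3,
             v$2 * v$3 - v$4]"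

definition droplet_cubic :: "real \<Rightarrow> real \<Rightarrow> real \<Rightarrow> real \<Rightarrow> real poly" where
  "droplet_cubic \<sigma> r A B = [: A * B * \<sigma>, \<sigma> * (1 - r + A * B), \<sigma> + 1, 1 :]"

definition r_crit :: "real \<Rightarrow> real \<Rightarrow> real \<Rightarrow> real" where
  "r_crit \<sigma> A B = 1 + A * B * (\<sigma> / (\<sigma> + 1))"

end

theory Submission
  imports Defs "HOL-Computational_Algebra.Fundamental_Theorem_Algebra"
begin

text \<open>
  At \<open>x\<^sub>d = k\<pi>/B\<close> with \<open>k\<close> odd we have \<open>cos (B x\<^sub>d) = -1\<close>, so the linearization of
  \<open>A sin (B x\<^sub>d)\<close> contributes \<open>-AB\<close> and expanding the Jacobian's characteristic determinant
  along the decoupled \<open>Z\<close>-row gives \<open>(\<lambda> + 1)\<close> times the cubic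
  \<open>\<lambda>\<^sup>3 + a\<^sub>2\<lambda>\<^sup>2 + a\<^sub>1\<lambda> + a\<^sub>0\<close>, whose coefficients satisfy \<open>a\<^sub>0, a\<^sub>2 > 0\<close>.

  If all roots are real and \<open>a\<^sub>1 \<ge> 0\<close> (i.e. \<open>r \<le> 1 + AB\<close>), the coefficients are
  nonnegative with \<open>a\<^sub>0 > 0\<close>, so no root is \<open>\<ge> 0\<close>; if \<open>a\<^sub>1 < 0\<close>, Vieta's formulas
  \<open>-abc = a\<^sub>0 > 0\<close>, \<open>ab + bc + ca = a\<^sub>1 < 0\<close> leave exactly one negative root.

  If there is a non-real root \<open>u + iv\<close>, the cubic factors as
  \<open>(\<lambda> + a\<^sub>2 + 2u)((\<lambda> - u)\<^sup>2 + v\<^sup>2)\<close>; comparing constant terms shows that the real root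
  \<open>-(a\<^sub>2 + 2u)\<close> is negative, and \<open>a\<^sub>0 - a\<^sub>2a\<^sub>1 = 2u((a\<^sub>2 + u)\<^sup>2 + v\<^sup>2)\<close>: the sign of
  \<open>u\<close> is that of the Routh-Hurwitz quantity \<open>a\<^sub>0 - a\<^sub>2a\<^sub>1\<close>, which for the droplet cubic is
  \<open>\<sigma>(\<sigma> + 1)(r - r\<^sub>c)\<close>. At \<open>r = r\<^sub>c\<close> the cubic is \<open>(\<lambda>\<^sup>2 + a\<^sub>1)(\<lambda> + a\<^sub>2)\<close>.
\<close>

lemma poly_map_poly_of_real:
  "poly (map_poly of_real p) (of_real x :: 'a :: {comm_ring_1, real_algebra_1}) = of_real (poly p x)"
  by (induction p) (auto simp: map_poly_pCons)

lemma poly_pos_if_coeffs_nonneg: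
  fixes p :: "real poly"
  assumes "\<And>i. coeff p i \<ge> 0" and "coeff p 0 > 0" and "x \<ge> 0"
  shows "poly p x > 0"
proof -
  have "coeff p 0 \<le> (\<Sum>i\<le>degree p. coeff p i * x ^ i)"
    using member_le_sum[of 0 "{..degree p}" "\<lambda>i. coeff p i * x ^ i"] assms by simp
  then show ?thesis
    using assms(2) by (simp add: poly_altdef)
qed

lemma real_poly_splits_if_complex_roots_real:
  fixes p :: "real poly"
  assumes "\<And>z. poly (map_poly of_real p) z = 0 \<Longrightarrow> Im z = 0"
  obtains root where "p = smult (lead_coeff p) (\<Prod>i<degree p. [:-root i, 1:])"
proof -
  let ?pc = "map_poly complex_of_real p"
  obtain croot where croot: "smult (lead_coeff ?pc) (\<Prod>i<degree ?pc. [:-croot i, 1:]) = ?pc"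
    by (rule complex_poly_decompose')
  define root where "root i = Re (croot i)" for i
  have "?pc \<noteq> 0"
    using assms[of \<i>] by auto
  moreover have deg: "degree ?pc = degree p"
    by (simp add: degree_map_poly)
  ultimately have "poly ?pc (croot i) = 0" if "i < degree p" for i
    using that by (subst croot [symmetric]) (auto simp: poly_prod)
  then have croot_real: "croot i = of_real (root i)" if "i < degree p" for i
    using assms that by (simp add: complex_eq_iff root_def)
  have "poly p x = poly (smult (lead_coeff p) (\<Prod>i<degree p. [:-root i, 1:])) x" for x
  proof -
    have "complex_of_real (poly p x) = poly ?pc (of_real x)"
      by (simp add: poly_map_poly_of_real)
    also have "\<dots> = of_real (lead_coeff p) * (\<Prod>i<degree p. of_real x - croot i)"
      by (subst croot [symmetric]) (simp add: poly_prod deg coeff_map_poly)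
    also have "(\<Prod>i<degree p. of_real x - croot i) = (\<Prod>i<degree p. of_real (x - root i))"
      by (rule prod.cong) (simp_all add: croot_real)
    finally have "complex_of_real (poly p x) = of_real (lead_coeff p * (\<Prod>i<degree p. x - root i))"
      by (simp only: of_real_mult of_real_prod)
    then show ?thesis
      by (simp only: of_real_eq_iff poly_smult poly_prod) simp
  qed
  then show ?thesis
    using that poly_ext by blast
qed

lemma real_root_if_Im_zero:
  fixes p :: "real poly"
  assumes "poly (map_poly of_real p) z = 0" and "Im z = 0"
  shows "poly p (Re z) = 0"
proof -
  have "of_real (Re z) = z"
    using assms(2) by (simp add: complex_eq_iff)
  then show ?thesis
    using assms(1) poly_map_poly_of_real[of p "Re z", where 'a = complex] by simp
qed

lemma monic_cubic_vieta:
  fixes a0 a1 a2 a b c :: "'a :: comm_ring_1"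
  assumes "[:a0, a1, a2, 1:] = [:-a, 1:] * [:-b, 1:] * [:-c, 1:]"
  shows "a0 = - (a * b * c)" and "a1 = a * b + b * c + c * a" and "a2 = - (a + b + c)"
  using assms by (simp_all add: algebra_simps)

lemma monic_cubic_two_positive_roots:
  fixes a0 a1 a2 a b c :: real
  assumes "[:a0, a1, a2, 1:] = [:-a, 1:] * [:-b, 1:] * [:-c, 1:]" and "a0 > 0" and "a1 < 0"
  obtains a' b' c' where "[:a0, a1, a2, 1:] = [:-a', 1:] * [:-b', 1:] * [:-c', 1:]"
    and "a' > 0" and "b' > 0" and "c' < 0"
proof -
  have prod: "a * b * c < 0" and pairs: "a * b + b * c + c * a < 0"
    using monic_cubic_vieta[OF assms(1)] assms(2,3) by simp_all
  have "\<not> (a < 0 \<and> b < 0 \<and> c < 0)"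
    using pairs mult_neg_neg[of a b] mult_neg_neg[of b c] mult_neg_neg[of c a] by linarith
  then have "a > 0 \<and> b > 0 \<and> c < 0 \<or> a > 0 \<and> c > 0 \<and> b < 0 \<or> b > 0 \<and> c > 0 \<and> a < 0"
    using prod by (auto simp: mult_less_0_iff zero_less_mult_iff)
  moreover have "[:-a, 1:] * [:-b, 1:] * [:-c, 1:] = [:-a, 1:] * [:-c, 1:] * [:-b, 1:]"
    and "[:-a, 1:] * [:-b, 1:] * [:-c, 1:] = [:-b, 1:] * [:-c, 1:] * [:-a, 1:]"
    by (simp_all only: ac_simps)
  ultimately show thesis
    using that assms(1) by metis
qed

lemma monic_cubic_nonreal_root_factor:
  fixes a0 a1 a2 :: real and z :: complex
  assumes "poly (map_poly of_real [:a0, a1, a2, 1:]) z = 0" and "Im z \<noteq> 0"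
  shows "[:a0, a1, a2, 1:] = [:a2 + 2 * Re z, 1:] * [:(Re z)\<^sup>2 + (Im z)\<^sup>2, -2 * Re z, 1:]"
proof -
  obtain u v where z: "z = Complex u v"
    by (cases z)
  have "Re (poly (map_poly of_real [:a0, a1, a2, 1:]) z) = 0"
    and "Im (poly (map_poly of_real [:a0, a1, a2, 1:]) z) = 0"
    using assms(1) by simp_all
  then have re: "u^3 - 3 * u * v^2 + a2 * (u^2 - v^2) + a1 * u + a0 = 0"
    and im: "v * (3 * u^2 - v^2 + 2 * a2 * u + a1) = 0"
    by (simp_all add: z map_poly_pCons power3_eq_cube power2_eq_square algebra_simps)
  have a1: "a1 = v^2 - 3 * u^2 - 2 * a2 * u"
    using im assms(2) z by simp
  have a0: "a0 = (a2 + 2 * u) * (u^2 + v^2)"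
    using re unfolding a1 by (simp add: algebra_simps power3_eq_cube power2_eq_square)
  show ?thesis
    by (simp add: z a0 a1 algebra_simps power2_eq_square)
qed

lemma monic_cubic_nonreal_root_real_roots_neg:
  fixes a0 a1 a2 x :: real and z :: complex
  assumes "poly (map_poly of_real [:a0, a1, a2, 1:]) z = 0" and "Im z \<noteq> 0"
    and "a0 > 0" and "poly [:a0, a1, a2, 1:] x = 0"
  shows "x < 0"
proof -
  note factor = monic_cubic_nonreal_root_factor[OF assms(1,2)]
  have "(x - Re z)\<^sup>2 + (Im z)\<^sup>2 > 0"
    using assms(2) by (simp add: add_nonneg_pos)
  moreover have "poly [:a0, a1, a2, 1:] x = (x + (a2 + 2 * Re z)) * ((x - Re z)\<^sup>2 + (Im z)\<^sup>2)"
    by (subst factor) (simp add: algebra_simps power2_eq_square)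
  ultimately have "x = - (a2 + 2 * Re z)"
    using assms(2,4) by auto
  moreover have "a0 = (a2 + 2 * Re z) * ((Re z)\<^sup>2 + (Im z)\<^sup>2)" and "(Re z)\<^sup>2 + (Im z)\<^sup>2 > 0"
    using factor assms(2) by (simp_all add: add_nonneg_pos)
  ultimately show ?thesis
    using assms(3) by (simp add: zero_less_mult_iff)
qed

lemma monic_cubic_nonreal_root_sgn_Re:
  fixes a0 a1 a2 :: real and z :: complex
  assumes "poly (map_poly of_real [:a0, a1, a2, 1:]) z = 0" and "Im z \<noteq> 0"
  shows "sgn (Re z) = sgn (a0 - a2 * a1)"
proof -
  note factor = monic_cubic_nonreal_root_factor[OF assms]
  have a0: "a0 = (a2 + 2 * Re z) * ((Re z)\<^sup>2 + (Im z)\<^sup>2)"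
    and a1: "a1 = (Re z)\<^sup>2 + (Im z)\<^sup>2 - 2 * Re z * (a2 + 2 * Re z)"
    using factor by (simp_all add: algebra_simps)
  have "a0 - a2 * a1 = 2 * Re z * ((a2 + Re z)\<^sup>2 + (Im z)\<^sup>2)"
    unfolding a0 a1 by (simp add: algebra_simps power2_eq_square)
  moreover have "(a2 + Re z)\<^sup>2 + (Im z)\<^sup>2 > 0"
    using assms(2) by (simp add: add_nonneg_pos)
  ultimately show ?thesis
    by (simp add: sgn_mult)
qed

lemma monic_cubic_imaginary_roots:
  fixes a0 a1 a2 \<omega> :: real
  assumes "a0 = a2 * a1" and "\<omega>\<^sup>2 = a1"
  shows "poly (map_poly of_real [:a0, a1, a2, 1:]) (\<i> * of_real \<omega>) = 0"
    and "poly (map_poly of_real [:a0, a1, a2, 1:]) (- \<i> * of_real \<omega>) = 0"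
proof -
  have factor: "poly (map_poly of_real [:a0, a1, a2, 1:]) w = (w\<^sup>2 + of_real a1) * (w + of_real a2)" for w :: complex
    by (simp add: assms(1) map_poly_pCons algebra_simps power2_eq_square)
  have "(\<i> * complex_of_real \<omega>)\<^sup>2 = - of_real a1" and "(- \<i> * complex_of_real \<omega>)\<^sup>2 = - of_real a1"
    by (simp_all add: power_mult_distrib flip: assms(2))
  then show "poly (map_poly of_real [:a0, a1, a2, 1:]) (\<i> * of_real \<omega>) = 0"
    and "poly (map_poly of_real [:a0, a1, a2, 1:]) (- \<i> * of_real \<omega>) = 0"
    by (simp_all add: factor)
qed

lemma vector_4 [simp]:
  "(vector [x, y, z, w] :: ('a::zero)^4) $ 1 = x"
  "(vector [x, y, z, w] :: ('a::zero)^4) $ 2 = y"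
  "(vector [x, y, z, w] :: ('a::zero)^4) $ 3 = z"
  "(vector [x, y, z, w] :: ('a::zero)^4) $ 4 = w"
  unfolding vector_def by simp_all

lemma det_4:
  "det (A::'a::comm_ring_1^4^4) =
   A$1$1*A$2$2*A$3$3*A$4$4 - A$1$1*A$2$2*A$3$4*A$4$3 - A$1$1*A$2$3*A$3$2*A$4$4
 + A$1$1*A$2$3*A$3$4*A$4$2 + A$1$1*A$2$4*A$3$2*A$4$3 - A$1$1*A$2$4*A$3$3*A$4$2
 - A$1$2*A$2$1*A$3$3*A$4$4 + A$1$2*A$2$1*A$3$4*A$4$3 + A$1$2*A$2$3*A$3$1*A$4$4
 - A$1$2*A$2$3*A$3$4*A$4$1 - A$1$2*A$2$4*A$3$1*A$4$3 + A$1$2*A$2$4*A$3$3*A$4$1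
 + A$1$3*A$2$1*A$3$2*A$4$4 - A$1$3*A$2$1*A$3$4*A$4$2 - A$1$3*A$2$2*A$3$1*A$4$4
 + A$1$3*A$2$2*A$3$4*A$4$1 + A$1$3*A$2$4*A$3$1*A$4$2 - A$1$3*A$2$4*A$3$2*A$4$1
 - A$1$4*A$2$1*A$3$2*A$4$3 + A$1$4*A$2$1*A$3$3*A$4$2 + A$1$4*A$2$2*A$3$1*A$4$3
 - A$1$4*A$2$2*A$3$3*A$4$1 - A$1$4*A$2$3*A$3$1*A$4$2 + A$1$4*A$2$3*A$3$2*A$4$1"
proof -
  have f234: "finite {2::4, 3, 4}" "1 \<notin> {2::4, 3, 4}"
    by auto
  have f34: "finite {3::4, 4}" "2 \<notin> {3::4, 4}"
    by auto
  have f4: "finite {4::4}" "3 \<notin> {4::4}"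
    by auto
  show ?thesis
    unfolding det_def UNIV_4
    unfolding sum_over_permutations_insert[OF f234]
    unfolding sum_over_permutations_insert[OF f34]
    unfolding sum_over_permutations_insert[OF f4]
    unfolding permutes_sing
    by (simp add: sign_swap_id permutation_swap_id sign_compose permutation_compose swap_id_eq algebra_simps)
qed

lemma has_derivative_vec_nth [derivative_intros]:
  "(f has_derivative f') F \<Longrightarrow> ((\<lambda>x. f x $ i) has_derivative (\<lambda>h. f' h $ i)) F"
  by (rule bounded_linear.has_derivative[OF bounded_linear_vec_nth])

lemma has_derivative_vec_componentwise:
  fixes f :: "'a::real_normed_vector \<Rightarrow> real^'n"
  assumes "\<And>i. ((\<lambda>x. f x $ i) has_derivative (\<lambda>h. f' h $ i)) (at x within S)"
  shows "(f has_derivative f') (at x within S)"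
proof -
  have "((\<lambda>x. f x \<bullet> b) has_derivative (\<lambda>h. f' h \<bullet> b)) (at x within S)" if b: "b \<in> Basis" for b
  proof -
    obtain i where "b = axis i 1"
      using b by (auto simp: Basis_vec_def)
    then show ?thesis
      using assms[of i] by (simp add: inner_axis)
  qed
  then show ?thesis
    using has_derivative_componentwise_within by blast
qed

text \<open>The Jacobian at the equilibria with odd \<open>k\<close>; for even \<open>k\<close> the entry \<open>-\<sigma>AB\<close> changes sign.\<close>

definition droplet_jacobian :: "real \<Rightarrow> real \<Rightarrow> real \<Rightarrow> real \<Rightarrow> real^4^4" where
  "droplet_jacobian \<sigma> r A B =
     vector [vector [0, 1, 0, 0],
             vector [- \<sigma> * A * B, - \<sigma>, \<sigma>, 0],
             vector [0, r, -1, 0],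
             vector [0, 0, 0, -1]]"

lemma droplet_field_equilibrium:
  fixes k :: int
  assumes "B > 0"
  shows "droplet_field \<sigma> r A B (vector [k * pi / B, 0, 0, 0]) = 0"
proof -
  have "B * (k * pi / B) = pi * k"
    using assms by simp
  then show ?thesis
    unfolding droplet_field_def by (simp add: vec_eq_iff forall_4)
qed

lemma droplet_field_has_derivative:
  fixes k :: int
  assumes "B > 0" and "odd k"
  shows "(droplet_field \<sigma> r A B has_derivative (\<lambda>h. droplet_jacobian \<sigma> r A B *v h))
           (at (vector [k * pi / B, 0, 0, 0]))"
proof -
  have cos: "cos (B * (k * pi / B)) = -1"
    using assms by (simp add: mult.commute)
  have "\<forall>i. ((\<lambda>v. droplet_field \<sigma> r A B v $ i) has_derivative (\<lambda>h. (droplet_jacobian \<sigma> r A B *v h) $ i))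
          (at (vector [k * pi / B, 0, 0, 0]))"
    unfolding forall_4 droplet_field_def droplet_jacobian_def vector_4
    by (intro conjI; rule has_derivative_eq_rhs, (auto intro!: derivative_eq_intros)[1])
       (auto simp: matrix_vector_mult_def sum_4 cos assms algebra_simps)
  then show ?thesis
    by (blast intro: has_derivative_vec_componentwise)
qed

lemma det_droplet_jacobian:
  "det (mat x - droplet_jacobian \<sigma> r A B) = (x + 1) * poly (droplet_cubic \<sigma> r A B) x"
  unfolding det_4 droplet_jacobian_def droplet_cubic_def
  by (simp add: mat_def algebra_simps power3_eq_cube power2_eq_square)

lemma droplet_cubic_real_roots_neg:
  assumes "\<sigma> > 0" and "A > 0" and "B > 0" and "r \<le> 1 + A * B"
    and "poly (droplet_cubic \<sigma> r A B) x = 0"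
  shows "x < 0"
proof (rule ccontr)
  assume "\<not> x < 0"
  then have "poly (droplet_cubic \<sigma> r A B) x > 0"
    using assms(1-4)
    by (intro poly_pos_if_coeffs_nonneg) (auto simp: droplet_cubic_def coeff_pCons split: nat.split)
  with assms(5) show False
    by simp
qed

lemma droplet_cubic_two_positive_roots:
  assumes "\<sigma> > 0" and "A > 0" and "B > 0" and "r > 1 + A * B"
    and "\<And>z. poly (map_poly of_real (droplet_cubic \<sigma> r A B)) z = 0 \<Longrightarrow> Im z = 0"
  obtains a b c where "droplet_cubic \<sigma> r A B = [:-a, 1:] * [:-b, 1:] * [:-c, 1:]"
    and "a > 0" and "b > 0" and "c < 0"
proof -
  obtain root
    where "droplet_cubic \<sigma> r A B
             = smult (lead_coeff (droplet_cubic \<sigma> r A B))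
                 (\<Prod>i<degree (droplet_cubic \<sigma> r A B). [:-root i, 1:])"
    using real_poly_splits_if_complex_roots_real assms(5) by blast
  then have "[:A * B * \<sigma>, \<sigma> * (1 - r + A * B), \<sigma> + 1, 1:]
               = [:-root 0, 1:] * [:-root 1, 1:] * [:-root 2, 1:]"
    by (simp add: droplet_cubic_def eval_nat_numeral ac_simps)
  moreover have "A * B * \<sigma> > 0" and "\<sigma> * (1 - r + A * B) < 0"
    using assms(1-4) by (simp_all add: mult_pos_neg)
  ultimately show thesis
    using monic_cubic_two_positive_roots that unfolding droplet_cubic_def by blast
qed

lemma droplet_cubic_nonreal_root_real_roots_neg:
  assumes "\<sigma> > 0" and "A > 0" and "B > 0"
    and "poly (map_poly of_real (droplet_cubic \<sigma> r A B)) z = 0" and "Im z \<noteq> 0"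
    and "poly (droplet_cubic \<sigma> r A B) x = 0"
  shows "x < 0"
  using monic_cubic_nonreal_root_real_roots_neg[of "A * B * \<sigma>" "\<sigma> * (1 - r + A * B)" "\<sigma> + 1" z x] assms
  unfolding droplet_cubic_def by simp

lemma droplet_cubic_nonreal_root_sgn_Re:
  assumes "\<sigma> > 0" and "poly (map_poly of_real (droplet_cubic \<sigma> r A B)) z = 0" and "Im z \<noteq> 0"
  shows "sgn (Re z) = sgn (r - r_crit \<sigma> A B)"
proof -
  have "A * B * \<sigma> - (\<sigma> + 1) * (\<sigma> * (1 - r + A * B)) = \<sigma> * (\<sigma> + 1) * (r - r_crit \<sigma> A B)"
    using assms(1) by (simp add: r_crit_def field_simps)
  then show ?thesis
    using monic_cubic_nonreal_root_sgn_Re[of "A * B * \<sigma>" "\<sigma> * (1 - r + A * B)" "\<sigma> + 1" z] assms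
    by (simp add: droplet_cubic_def sgn_mult)
qed

lemma droplet_cubic_critical_imaginary_roots:
  assumes "\<sigma> > 0" and "\<omega>\<^sup>2 = A * B * \<sigma> / (\<sigma> + 1)"
  shows "poly (map_poly of_real (droplet_cubic \<sigma> (r_crit \<sigma> A B) A B)) (\<i> * of_real \<omega>) = 0"
    and "poly (map_poly of_real (droplet_cubic \<sigma> (r_crit \<sigma> A B) A B)) (- \<i> * of_real \<omega>) = 0"
proof -
  have a1: "\<sigma> * (1 - r_crit \<sigma> A B + A * B) = \<omega>\<^sup>2"
    and a0: "A * B * \<sigma> = (\<sigma> + 1) * (\<sigma> * (1 - r_crit \<sigma> A B + A * B))"
    using assms by (simp_all add: r_crit_def field_simps)
  show "poly (map_poly of_real (droplet_cubic \<sigma> (r_crit \<sigma> A B) A B)) (\<i> * of_real \<omega>) = 0"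
    and "poly (map_poly of_real (droplet_cubic \<sigma> (r_crit \<sigma> A B) A B)) (- \<i> * of_real \<omega>) = 0"
    unfolding droplet_cubic_def using monic_cubic_imaginary_roots[OF a0 a1 [symmetric]] by simp_all
qed

theorem mainTheorem2:
  fixes \<sigma> r A B :: real and k :: int
  defines "p \<equiv> droplet_cubic \<sigma> r A B"
      and "pc \<equiv> map_poly complex_of_real (droplet_cubic \<sigma> r A B)"
  assumes "\<sigma> > 0" and "A > 0" and "B > 0" and "odd k"
  shows
    "droplet_field \<sigma> r A B (vector [k * pi / B, 0, 0, 0]) = 0
     \<and> (\<exists>J :: real^4^4.
          (droplet_field \<sigma> r A B has_derivative (\<lambda>h. J *v h)) (at (vector [k * pi / B, 0, 0, 0]))
          \<and> (\<forall>x::real. det (mat x - J) = (x + 1) * poly p x))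
     \<and> ((\<forall>z. poly pc z = 0 \<longrightarrow> Im z = 0) \<longrightarrow>
          (r < 1 + A * B \<longrightarrow> (\<forall>z. poly pc z = 0 \<longrightarrow> Re z < 0))
        \<and> (r > 1 + A * B \<longrightarrow>
             (\<exists>a b c::real. p = [:-a, 1:] * [:-b, 1:] * [:-c, 1:] \<and> a > 0 \<and> b > 0 \<and> c \<le> 0)))
     \<and> ((\<exists>z. poly pc z = 0 \<and> Im z \<noteq> 0) \<longrightarrow>
          (\<forall>x::real. poly p x = 0 \<longrightarrow> x < 0)
        \<and> (r < r_crit \<sigma> A B \<longrightarrow> (\<forall>z. poly pc z = 0 \<and> Im z \<noteq> 0 \<longrightarrow> Re z < 0))
        \<and> (r > r_crit \<sigma> A B \<longrightarrow> (\<forall>z. poly pc z = 0 \<and> Im z \<noteq> 0 \<longrightarrow> Re z > 0)))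
     \<and> (r = r_crit \<sigma> A B \<longrightarrow>
          (\<exists>\<omega>::real. \<omega>\<^sup>2 = A * B * \<sigma> / (\<sigma> + 1)
             \<and> poly pc (\<i> * complex_of_real \<omega>) = 0 \<and> poly pc (- \<i> * complex_of_real \<omega>) = 0))"
proof -
  note pos = \<open>\<sigma> > 0\<close> \<open>A > 0\<close> \<open>B > 0\<close>
  show ?thesis
  proof (intro conjI impI allI)
    show "droplet_field \<sigma> r A B (vector [k * pi / B, 0, 0, 0]) = 0"
      using \<open>B > 0\<close> by (rule droplet_field_equilibrium)
    show "\<exists>J :: real^4^4.
            (droplet_field \<sigma> r A B has_derivative (\<lambda>h. J *v h)) (at (vector [k * pi / B, 0, 0, 0]))
            \<and> (\<forall>x::real. det (mat x - J) = (x + 1) * poly p x)"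
      using droplet_field_has_derivative[OF \<open>B > 0\<close> \<open>odd k\<close>] det_droplet_jacobian
      unfolding p_def by blast
  next
    fix z
    assume "\<forall>z. poly pc z = 0 \<longrightarrow> Im z = 0" and "r < 1 + A * B" and "poly pc z = 0"
    then show "Re z < 0"
      using droplet_cubic_real_roots_neg[OF pos, of r "Re z"] real_root_if_Im_zero[of p z]
      unfolding p_def pc_def by simp
  next
    assume "\<forall>z. poly pc z = 0 \<longrightarrow> Im z = 0" and "r > 1 + A * B"
    then show "\<exists>a b c::real. p = [:-a, 1:] * [:-b, 1:] * [:-c, 1:] \<and> a > 0 \<and> b > 0 \<and> c \<le> 0"
      using droplet_cubic_two_positive_roots[OF pos, of r] less_imp_le unfolding p_def pc_def
      by metis
  next
    fix x
    assume "\<exists>z. poly pc z = 0 \<and> Im z \<noteq> 0" and "poly p x = 0"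
    then show "x < 0"
      using droplet_cubic_nonreal_root_real_roots_neg pos unfolding p_def pc_def by blast
  next
    fix z
    assume "r < r_crit \<sigma> A B" and "poly pc z = 0 \<and> Im z \<noteq> 0"
    then show "Re z < 0"
      using droplet_cubic_nonreal_root_sgn_Re[of \<sigma> r A B z] pos unfolding pc_def
      by (simp add: sgn_1_neg)
  next
    fix z
    assume "r > r_crit \<sigma> A B" and "poly pc z = 0 \<and> Im z \<noteq> 0"
    then show "Re z > 0"
      using droplet_cubic_nonreal_root_sgn_Re[of \<sigma> r A B z] pos unfolding pc_def
      by (simp add: sgn_1_pos)
  next
    assume "r = r_crit \<sigma> A B"
    moreover have "(sqrt (A * B * \<sigma> / (\<sigma> + 1)))\<^sup>2 = A * B * \<sigma> / (\<sigma> + 1)"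
      using pos by simp
    ultimately show "\<exists>\<omega>::real. \<omega>\<^sup>2 = A * B * \<sigma> / (\<sigma> + 1)
                 \<and> poly pc (\<i> * complex_of_real \<omega>) = 0 \<and> poly pc (- \<i> * complex_of_real \<omega>) = 0"
      using droplet_cubic_critical_imaginary_roots[OF \<open>\<sigma> > 0\<close>] unfolding pc_def by blast
  qed
qed

end
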